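(* Let $n \ge 2$, let $m_1,\dots,m_n>0$ be masses, and let $q_1=(x_1,y_1),\dots,q_n=(x_n,y_n)\in\mathbb{R}^2$ be pairwise distinct points. For $1\le i\neq j\le n$ let $v_{i,j}\in\mathbb{R}^{2n}$ be the twist vector defined in the context. Then the linear subspace of $\mathbb{R}^{2n}$ spanned by $\{v_{i,j} : 1\le i\neq j\le n\}$ has dimension $2n-3$, unless all $n$ points $q_1,\dots,q_n$ lie on a common line, in which case the dimension is $n-1$.
   Context: Configurations are written in flattened coordinates $(x_1,y_1,x_2,y_2,\ldots,x_n,y_n)\in\mathbb{R}^{2n}$. Write $x_{i,j}=x_i-x_j$ and $y_{i,j}=y_i-y_j$. The twist vector $v_{i,j}$ (for $i\neq j$) at the configuration $(q_1,\dots,q_n)$ is the vector in $\mathbb{R}^{2n}$ whose only possibly nonzero components are: the $x_i$-component $m_j y_{i,j}$, the $y_i$-component $-m_j x_{i,j}$, the $x_j$-component $-m_i y_{i,j}$, and the $y_j$-component $m_i x_{i,j}$; all other components are $0$. (It is the infinitesimal rotation of the pair $q_i,q_j$ about their center of mass.) *)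

theory Defs
  imports "HOL-Analysis.Analysis"
begin

text \<open>A configuration of n points in the plane is an element of (real^2)^'n, which
  is R^{2n} with coordinates (x_1,y_1,...,x_n,y_n): component k is the point q_k,
  and its components 1 and 2 are x_k and y_k.\<close>

definition twist :: "('n::finite \<Rightarrow> real) \<Rightarrow> (real^2)^'n \<Rightarrow> 'n \<Rightarrow> 'n \<Rightarrow> (real^2)^'n" where
  "twist m q i j = (\<chi> k.
     if k = i then vector [  m j * (q$i$2 - q$j$2), - m j * (q$i$1 - q$j$1)]
     else if k = j then vector [ - m i * (q$i$2 - q$j$2), m i * (q$i$1 - q$j$1)]
     else 0)"

end

theory Submission
  imports Defs
begin

text \<open>Writing \<open>u\<^sub>k = m\<^sub>k A\<^sub>k\<close>, the pairing of \<open>u\<close> with \<open>v\<^sub>i\<^sub>j\<close> is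
  \<open>m\<^sub>i m\<^sub>j\<close> times the planar cross product of \<open>A\<^sub>i - A\<^sub>j\<close> and \<open>q\<^sub>i - q\<^sub>j\<close>. Hence the
  orthogonal complement of the twists is the mass-weighted image of the space of parallel
  redrawings: velocity fields \<open>A\<close> under which every segment \<open>q\<^sub>i q\<^sub>j\<close> moves parallel to
  itself. If the points span the plane, pick a non-degenerate triangle; after subtracting the
  translation plus dilation that matches \<open>A\<close> on one of its sides, \<open>A\<close> vanishes at its
  vertices, and then everywhere, because every further point forms a non-degenerate triangle
  with two points where \<open>A\<close> vanishes. So this space has dimension 3. If the points lie on a
  line with direction \<open>d\<close>, the condition only says that all \<open>A\<^sub>k\<close> have the same
  component normal to \<open>d\<close>, which leaves \<open>n + 1\<close> parameters. The span of the twists has the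
  complementary dimension.\<close>

definition cross2 :: "real^2 \<Rightarrow> real^2 \<Rightarrow> real" where
  "cross2 x y = x$1 * y$2 - x$2 * y$1"

definition rot90 :: "real^2 \<Rightarrow> real^2" where
  "rot90 d = vector [- d$2, d$1]"

lemma cross2_eq_0_iff_collinear: "cross2 x y = 0 \<longleftrightarrow> collinear {0, x, y}"
proof
  assume cross: "cross2 x y = 0"
  show "collinear {0, x, y}"
  proof (cases "x = 0")
    case False
    then have "x \<bullet> x \<noteq> 0" by simp
    moreover have "(x \<bullet> x) *\<^sub>R y = (x \<bullet> y) *\<^sub>R x"
      using cross by (simp add: vec_eq_iff forall_2 inner_vec_def sum_2 cross2_def) algebra
    ultimately have "y = ((x \<bullet> y) / (x \<bullet> x)) *\<^sub>R x"
      by (simp add: vec_eq_iff forall_2 field_simps)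
    then show ?thesis by (metis collinear_lemma)
  qed simp
next
  assume "collinear {0, x, y}"
  then show "cross2 x y = 0"
    by (auto simp: collinear_lemma cross2_def)
qed

lemma collinear_3_iff_cross2: "collinear {a, b, c} \<longleftrightarrow> cross2 (b - a) (c - a) = 0"
  by (subst insert_commute, subst collinear_3) (simp_all add: cross2_eq_0_iff_collinear)

lemma cross2_eq_0_imp_parallel:
  assumes "cross2 x d = 0" "d \<noteq> 0"
  obtains c where "x = c *\<^sub>R d"
  using assms by (auto simp: cross2_eq_0_iff_collinear collinear_lemma insert_commute)

lemma cross2_eq_0_both_imp_0:
  assumes "cross2 x y = 0" "cross2 x z = 0" "cross2 y z \<noteq> 0"
  shows "x = 0"
proof -
  have "x$1 * cross2 y z = 0" "x$2 * cross2 y z = 0"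
    using assms(1,2) unfolding cross2_def by algebra+
  then show ?thesis
    using assms(3) by (simp add: vec_eq_iff forall_2)
qed

lemma cross2_add_left: "cross2 (x + y) z = cross2 x z + cross2 y z"
  by (simp add: cross2_def algebra_simps)

lemma cross2_scaleR_left: "cross2 (c *\<^sub>R x) z = c * cross2 x z"
  by (simp add: cross2_def algebra_simps)

lemma vec2_decompose:
  assumes "d \<noteq> 0"
  shows "x = ((x \<bullet> d) / (d \<bullet> d)) *\<^sub>R d + (cross2 d x / (d \<bullet> d)) *\<^sub>R rot90 d"
proof -
  have "d \<bullet> d \<noteq> 0" using assms by simp
  moreover have "(d \<bullet> d) *\<^sub>R x = (x \<bullet> d) *\<^sub>R d + cross2 d x *\<^sub>R rot90 d"
    by (simp add: vec_eq_iff forall_2 inner_vec_def sum_2 cross2_def rot90_def) algebra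
  ultimately show ?thesis
    by (simp add: vec_eq_iff forall_2 field_simps)
qed

lemma rot90_combination_eq_0:
  assumes "d \<noteq> 0" "l *\<^sub>R d + c *\<^sub>R rot90 d = 0"
  shows "l = 0" "c = 0"
proof -
  have "d \<bullet> d \<noteq> 0" using assms(1) by simp
  moreover have "(l *\<^sub>R d + c *\<^sub>R rot90 d) \<bullet> d = l * (d \<bullet> d)"
    "(l *\<^sub>R d + c *\<^sub>R rot90 d) \<bullet> rot90 d = c * (d \<bullet> d)"
    by (simp_all add: inner_vec_def sum_2 rot90_def algebra_simps)
  ultimately show "l = 0" "c = 0"
    using assms(2) by (metis inner_zero_left mult_eq_0_iff)+
qed

lemma dim_span_add_dim_orthogonal_comp:
  fixes S :: "'a::euclidean_space set"
  shows "dim (span S) + dim (S\<^sup>\<bottom>) = DIM('a)"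
proof -
  have "S\<^sup>\<bottom> = {y \<in> UNIV. \<forall>x \<in> span S. orthogonal x y}"
    unfolding orthogonal_comp_def
    by (metis (no_types, lifting) orthogonal_commute orthogonal_to_span span_base UNIV_I)
  then show ?thesis
    using dim_subspace_orthogonal_to_vectors[of "span S" UNIV] by simp
qed

lemma dim_range_linear_inj:
  fixes f :: "'a::euclidean_space \<Rightarrow> 'b::euclidean_space"
  assumes "linear f" "inj f"
  shows "dim (range f) = DIM('a)"
  using eucl.dim_image_eq[OF assms(1), of UNIV] assms(2) by simp

definition mass_weight :: "('n::finite \<Rightarrow> real) \<Rightarrow> (real^2)^'n \<Rightarrow> (real^2)^'n" where
  "mass_weight m A = (\<chi> k. m k *\<^sub>R A$k)"

lemma linear_mass_weight: "linear (mass_weight m)"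
  by (rule linearI) (simp_all add: mass_weight_def vec_eq_iff algebra_simps)

lemma mass_weight_inverse:
  assumes "\<And>k. m k \<noteq> 0"
  shows "mass_weight m (mass_weight (\<lambda>k. inverse (m k)) u) = u"
  using assms by (simp add: mass_weight_def vec_eq_iff)

lemma inj_mass_weight:
  assumes "\<And>k. m k \<noteq> 0"
  shows "inj (mass_weight m)"
  using assms by (auto simp: inj_def mass_weight_def vec_eq_iff)

lemma inner_twist_mass_weight:
  "twist m q i j \<bullet> mass_weight m A = m i * m j * cross2 (A$i - A$j) (q$i - q$j)"
proof (cases "i = j")
  case True
  then have "twist m q i j = 0" by (simp add: twist_def vec_eq_iff forall_2)
  with True show ?thesis by (simp add: cross2_def)
next
  case False
  have inner_vector: "x \<bullet> vector [a, b] = x$1 * a + x$2 * b" for x :: "real^2" and a b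
    by (simp add: inner_vec_def sum_2)
  from False have "twist m q i j = axis i (vector [m j * (q$i$2 - q$j$2), - m j * (q$i$1 - q$j$1)])
     + axis j (vector [- m i * (q$i$2 - q$j$2), m i * (q$i$1 - q$j$1)])"
    by (auto simp: twist_def axis_def vec_eq_iff)
  then show ?thesis
    by (subst inner_commute)
      (simp add: inner_add_right inner_axis inner_vector mass_weight_def cross2_def algebra_simps)
qed

definition parallel_redrawings :: "(real^2)^'n::finite \<Rightarrow> ((real^2)^'n) set" where
  "parallel_redrawings q = {A. \<forall>i j. cross2 (A$i - A$j) (q$i - q$j) = 0}"

lemma orthogonal_comp_twists:
  assumes "\<And>k. m k \<noteq> 0"
  shows "{twist m q i j | i j. i \<noteq> j}\<^sup>\<bottom> = mass_weight m ` parallel_redrawings q"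
proof (intro equalityI subsetI)
  fix u assume u: "u \<in> {twist m q i j | i j. i \<noteq> j}\<^sup>\<bottom>"
  define A where "A = mass_weight (\<lambda>k. inverse (m k)) u"
  have "cross2 (A$i - A$j) (q$i - q$j) = 0" for i j
  proof (cases "i = j")
    case False
    then have "twist m q i j \<bullet> mass_weight m A = 0"
      using u assms by (auto simp: A_def mass_weight_inverse orthogonal_comp_def orthogonal_def)
    then show ?thesis using assms by (simp add: inner_twist_mass_weight)
  qed (simp add: cross2_def)
  then have "A \<in> parallel_redrawings q" by (simp add: parallel_redrawings_def)
  moreover have "u = mass_weight m A"
    unfolding A_def using assms by (simp add: mass_weight_inverse)
  ultimately show "u \<in> mass_weight m ` parallel_redrawings q" by blast
next
  fix u assume "u \<in> mass_weight m ` parallel_redrawings q"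
  then show "u \<in> {twist m q i j | i j. i \<noteq> j}\<^sup>\<bottom>"
    by (auto simp: orthogonal_comp_def orthogonal_def inner_twist_mass_weight
        parallel_redrawings_def)
qed

lemma dim_span_twists:
  fixes m :: "'n::finite \<Rightarrow> real"
  assumes "\<And>k. m k \<noteq> 0"
  shows "dim (span {twist m q i j | i j. i \<noteq> j}) + dim (parallel_redrawings q) = 2 * CARD('n)"
proof -
  have "dim (mass_weight m ` parallel_redrawings q) = dim (parallel_redrawings q)"
    using inj_mass_weight[of m] assms
    by (intro eucl.dim_image_eq linear_mass_weight) (meson inj_on_subset subset_UNIV)
  then show ?thesis
    using dim_span_add_dim_orthogonal_comp[of "{twist m q i j | i j. i \<noteq> j}"]
    by (simp add: orthogonal_comp_twists[OF assms])
qed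

lemma subspace_parallel_redrawings: "subspace (parallel_redrawings q)"
  by (simp add: subspace_def parallel_redrawings_def add_diff_add cross2_add_left
      scaleR_diff_right[symmetric] cross2_scaleR_left) (simp add: cross2_def)

lemma parallel_redrawing_vanishes:
  assumes "A \<in> parallel_redrawings q" "A$i = 0" "A$j = 0" "\<not> collinear {q$i, q$j, q$k}"
  shows "A$k = 0"
proof (rule cross2_eq_0_both_imp_0)
  have "cross2 (A$k - A$l) (q$k - q$l) = 0" for l
    using assms(1) by (simp add: parallel_redrawings_def)
  then show "cross2 (A$k) (q$k - q$i) = 0" "cross2 (A$k) (q$k - q$j) = 0"
    using assms(2,3) by (metis diff_zero)+
  have "\<not> collinear {q$k, q$i, q$j}"
    using assms(4) by (simp add: insert_commute)
  then show "cross2 (q$k - q$i) (q$k - q$j) \<noteq> 0"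
    by (simp add: collinear_3_iff_cross2 cross2_def algebra_simps)
qed

definition dilation_field :: "(real^2)^'n::finite \<Rightarrow> (real^2) \<times> real \<Rightarrow> (real^2)^'n" where
  "dilation_field q p = (\<chi> k. fst p - snd p *\<^sub>R q$k)"

lemma linear_dilation_field: "linear (dilation_field q)"
  by (rule linearI) (simp_all add: dilation_field_def vec_eq_iff algebra_simps)

lemma inj_dilation_field:
  assumes "q$a \<noteq> q$b"
  shows "inj (dilation_field q)"
proof (rule linear_injective_0[OF linear_dilation_field, THEN iffD2], intro allI impI)
  fix p assume "dilation_field q p = 0"
  then have "fst p = snd p *\<^sub>R q$a" "fst p = snd p *\<^sub>R q$b"
    by (auto simp: dilation_field_def vec_eq_iff)
  then have "snd p = 0" using assms by auto
  with \<open>fst p = snd p *\<^sub>R q$a\<close> show "p = 0" by (simp add: prod_eq_iff)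
qed

lemma dilation_field_in_parallel_redrawings: "dilation_field q p \<in> parallel_redrawings q"
  by (simp add: parallel_redrawings_def dilation_field_def cross2_def algebra_simps)

lemma parallel_redrawing_is_dilation_field:
  assumes inj: "inj (($) q)" and triangle: "\<not> collinear {q$a, q$b, q$c}"
    and A: "A \<in> parallel_redrawings q"
  shows "A \<in> range (dilation_field q)"
proof -
  have "q$a \<noteq> q$b" using triangle by auto
  then obtain t where t: "A$b - A$a = t *\<^sub>R (q$b - q$a)"
    using cross2_eq_0_imp_parallel[of "A$b - A$a" "q$b - q$a"] A
    by (auto simp: parallel_redrawings_def)
  define B where "B = A - dilation_field q (A$a - t *\<^sub>R q$a, - t)"
  have B: "B \<in> parallel_redrawings q"
    unfolding B_def using A dilation_field_in_parallel_redrawings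
    by (intro subspace_diff subspace_parallel_redrawings)
  have Ba: "B$a = 0" and Bb: "B$b = 0"
    using t by (simp_all add: B_def dilation_field_def algebra_simps)
  have Bc: "B$c = 0" using parallel_redrawing_vanishes[OF B Ba Bb triangle] .
  have "B$k = 0" for k
  proof (cases "k = a \<or> \<not> collinear {q$a, q$b, q$k}")
    case True
    then show ?thesis using Ba parallel_redrawing_vanishes[OF B Ba Bb] by blast
  next
    case False
    then have "q$a \<noteq> q$k" "collinear {q$b, q$a, q$k}"
      using inj by (auto simp: inj_eq insert_commute)
    then have "\<not> collinear {q$a, q$c, q$k}"
      using triangle collinear_3_trans[of "q$b" "q$a" "q$k" "q$c"] by (auto simp: insert_commute)
    then show ?thesis using parallel_redrawing_vanishes[OF B Ba Bc] by blast
  qed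
  then have "A = dilation_field q (A$a - t *\<^sub>R q$a, - t)"
    by (simp add: B_def vec_eq_iff)
  then show ?thesis by blast
qed

definition line_field :: "real^2 \<Rightarrow> real \<times> (real^'n::finite) \<Rightarrow> (real^2)^'n" where
  "line_field d p = (\<chi> k. snd p $ k *\<^sub>R d + fst p *\<^sub>R rot90 d)"

lemma linear_line_field: "linear (line_field d)"
  by (rule linearI) (simp_all add: line_field_def vec_eq_iff algebra_simps)

lemma inj_line_field:
  assumes "d \<noteq> 0"
  shows "inj (line_field d)"
proof (rule linear_injective_0[OF linear_line_field, THEN iffD2], intro allI impI)
  fix p assume "line_field d p = 0"
  then have "snd p $ k *\<^sub>R d + fst p *\<^sub>R rot90 d = 0" for k
    by (simp add: line_field_def vec_eq_iff)
  then have "snd p $ k = 0" "fst p = 0" for k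
    using rot90_combination_eq_0[OF assms] by blast+
  then show "p = 0" by (simp add: prod_eq_iff vec_eq_iff)
qed

lemma parallel_redrawings_on_line:
  fixes q :: "(real^2)^'n::finite"
  assumes inj: "inj (($) q)" and "d \<noteq> 0" and on_line: "\<And>k. \<exists>t. q$k - q$a = t *\<^sub>R d"
  shows "parallel_redrawings q = range (line_field d)"
proof (intro equalityI subsetI)
  fix A assume A: "A \<in> parallel_redrawings q"
  have same_normal: "cross2 d (A$k) = cross2 d (A$a)" for k
  proof (cases "k = a")
    case False
    obtain t where t: "q$k - q$a = t *\<^sub>R d" using on_line by blast
    have "t \<noteq> 0" using t inj False by (auto simp: inj_eq)
    moreover have "cross2 (A$k - A$a) (t *\<^sub>R d) = 0"
      using A unfolding t[symmetric] by (simp add: parallel_redrawings_def)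
    moreover have "cross2 (A$k - A$a) (t *\<^sub>R d) = t * (cross2 d (A$a) - cross2 d (A$k))"
      by (simp add: cross2_def algebra_simps)
    ultimately show ?thesis by simp
  qed simp
  have "A$k = ((A$k \<bullet> d) / (d \<bullet> d)) *\<^sub>R d + (cross2 d (A$a) / (d \<bullet> d)) *\<^sub>R rot90 d" for k
    using vec2_decompose[OF \<open>d \<noteq> 0\<close>, of "A$k"] unfolding same_normal[of k] .
  then have "A = line_field d (cross2 d (A$a) / (d \<bullet> d), \<chi> k. (A$k \<bullet> d) / (d \<bullet> d))"
    by (subst vec_eq_iff) (simp add: line_field_def)
  then show "A \<in> range (line_field d)" by blast
next
  fix A :: "(real^2)^'n" assume "A \<in> range (line_field d)"
  then obtain p where p: "A = line_field d p" by blast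
  obtain t where t: "q$k - q$a = t k *\<^sub>R d" for k using on_line by metis
  have "cross2 (A$i - A$j) (q$i - q$j) = 0" for i j
  proof -
    have "A$i - A$j = (snd p $ i - snd p $ j) *\<^sub>R d"
      by (simp add: p line_field_def algebra_simps)
    moreover have "q$i - q$j = (t i - t j) *\<^sub>R d"
      using t[of i] t[of j] by (simp add: algebra_simps)
    ultimately show ?thesis by (simp add: cross2_def)
  qed
  then show "A \<in> parallel_redrawings q" by (simp add: parallel_redrawings_def)
qed

lemma dim_parallel_redrawings:
  fixes q :: "(real^2)^'n::finite"
  assumes inj: "inj (($) q)" and "CARD('n) \<ge> 2"
  shows "dim (parallel_redrawings q) = (if collinear (range (($) q)) then CARD('n) + 1 else 3)"
proof -
  obtain a b :: 'n where "a \<noteq> b"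
    using assms(2) card_le_Suc0_iff_eq[of "UNIV :: 'n set"] by force
  then have ab: "q$a \<noteq> q$b" using inj by (simp add: inj_eq)
  show ?thesis
  proof (cases "collinear (range (($) q))")
    case True
    have "\<exists>t. q$k - q$a = t *\<^sub>R (q$b - q$a)" for k
    proof -
      have "collinear {q$b, q$a, q$k}" using True by (rule collinear_subset) auto
      then show ?thesis using ab by (auto simp: collinear_3 collinear_lemma)
    qed
    then have "parallel_redrawings q = range (line_field (q$b - q$a))"
      using ab by (intro parallel_redrawings_on_line[OF inj]) auto
    moreover have "dim (range (line_field (q$b - q$a) :: _ \<Rightarrow> (real^2)^'n)) = CARD('n) + 1"
      using ab by (simp add: dim_range_linear_inj[OF linear_line_field inj_line_field])
    ultimately show ?thesis using True by simp
  next
    case False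
    have "range (($) q) = insert (q$a) (insert (q$b) (range (($) q)))" by auto
    then obtain c where "\<not> collinear {q$a, q$b, q$c}"
      using False collinear_triples[OF ab, of "range (($) q)"] by auto
    then have "parallel_redrawings q = range (dilation_field q)"
      using parallel_redrawing_is_dilation_field[OF inj] dilation_field_in_parallel_redrawings
      by blast
    moreover have "dim (range (dilation_field q)) = 3"
      using dim_range_linear_inj[OF linear_dilation_field inj_dilation_field[OF ab]] by simp
    ultimately show ?thesis using False by simp
  qed
qed

theorem mainTheorem1:
  fixes m :: "'n::finite \<Rightarrow> real" and q :: "(real^2)^'n"
  assumes "CARD('n) \<ge> 2"
    and "\<And>i. m i > 0"
    and "\<And>i j. i \<noteq> j \<Longrightarrow> q$i \<noteq> q$j"
  shows "dim (span {twist m q i j | i j. i \<noteq> j}) =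
           (if collinear {q$i | i. True} then CARD('n) - 1 else 2 * CARD('n) - 3)"
proof -
  have masses: "m k \<noteq> 0" for k using assms(2)[of k] by simp
  have inj: "inj (($) q)" using assms(3) by (auto simp: inj_def)
  have "{q$i | i. True} = range (($) q)" by auto
  then show ?thesis
    using dim_span_twists[of m q] masses dim_parallel_redrawings[OF inj assms(1)] by auto
qed

end
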